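(* Let $G$ be a graph on vertex set $[m]$, and let $k\ge1$. Let $y^0,\bar y^0,y^1,\bar y^1,\dots,y^{2k},\bar y^{2k}\in\mathrm{Stable}(G)$ be $4k+2$ pairwise distinct vectors satisfying $$y^i+\bar y^i=y^0+\bar y^0\quad\text{for all } i\in\{0,\dots,2k\}.$$ Define $I,J,j_0,U_i,S(i,j,t),y^*(S),\bar y^*(S)$ as in the context. Then for all $0\le i<j<t\le 2k$, both $y^*(S(i,j,t))$ and $\bar y^*(S(i,j,t))$ belong to $\mathrm{Stable}(G)$.
   Context: **Graph polytope.** For a graph $G=(V,E)$, $\mathrm{Stable}(G)=\{x\in\{0,1\}^V: x_u+x_v\le1 \text{ for every edge }\{u,v\}\in E\}$. **Index sets.** - $I=\{i\in[m]: y^0_i=\bar y^0_i\}$ and $J=[m]\setminus I=\{j: y^0_j+\bar y^0_j=1\}$. The set $J$ is nonempty. - Fix any $j_0\in J$. - For $i\in\{0,\dots,2k\}$, let $U_i=\{j\in J: y^i_j=1\}$ if $y^i_{j_0}=1$, and $U_i=\{j\in J:\bar y^i_j=1\}$ otherwise. - Let $\bar U_i=J\setminus U_i$. - For $0\le i<j<t\le2k$, let $S(i,j,t)=U_i\,\triangle\,U_j\,\triangle\,U_t$, where $\triangle$ is symmetric difference. **The vectors $y^*(S)$ and $\bar y^*(S)$.** For $S\subseteq J$: - $y^*(S)\in\{0,1\}^m$ has coordinate $y^0_p$ for $p\in I$, $1$ for $p\in S$, and $0$ for $p\in J\setminus S$; - $\bar y^*(S)$ has coordinate $y^0_p$ for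 $p\in I$, $0$ for $p\in S$, and $1$ for $p\in J\setminus S$. *)

theory Defs
  imports Main
begin

definition is_graph :: "nat \<Rightarrow> nat set set \<Rightarrow> bool" where
  "is_graph m E \<longleftrightarrow> (\<forall>e\<in>E. \<exists>u v. u \<noteq> v \<and> u \<in> {1..m} \<and> v \<in> {1..m} \<and> e = {u, v})"

definition Stable :: "nat \<Rightarrow> nat set set \<Rightarrow> (nat \<Rightarrow> nat) set" where
  "Stable m E = {x. (\<forall>p. p \<notin> {1..m} \<longrightarrow> x p = 0) \<and> (\<forall>p\<in>{1..m}. x p \<in> {0, 1})
                  \<and> (\<forall>u v. {u, v} \<in> E \<longrightarrow> x u + x v \<le> 1)}"

definition Iset :: "nat \<Rightarrow> (nat \<Rightarrow> nat) \<Rightarrow> (nat \<Rightarrow> nat) \<Rightarrow> nat set" where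
  "Iset m y0 yb0 = {p \<in> {1..m}. y0 p = yb0 p}"

definition Jset :: "nat \<Rightarrow> (nat \<Rightarrow> nat) \<Rightarrow> (nat \<Rightarrow> nat) \<Rightarrow> nat set" where
  "Jset m y0 yb0 = {1..m} - Iset m y0 yb0"

definition Uset :: "nat set \<Rightarrow> nat \<Rightarrow> (nat \<Rightarrow> nat) \<Rightarrow> (nat \<Rightarrow> nat) \<Rightarrow> nat set" where
  "Uset J j0 y yb = (if y j0 = 1 then {j \<in> J. y j = 1} else {j \<in> J. yb j = 1})"

definition symdiff :: "'a set \<Rightarrow> 'a set \<Rightarrow> 'a set" where
  "symdiff A B = (A - B) \<union> (B - A)"

definition ystar :: "nat set \<Rightarrow> nat set \<Rightarrow> (nat \<Rightarrow> nat) \<Rightarrow> nat set \<Rightarrow> (nat \<Rightarrow> nat)" where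
  "ystar I J y0 S = (\<lambda>p. if p \<in> I then y0 p else if p \<in> S \<inter> J then 1 else 0)"

definition ybstar :: "nat set \<Rightarrow> nat set \<Rightarrow> (nat \<Rightarrow> nat) \<Rightarrow> nat set \<Rightarrow> (nat \<Rightarrow> nat)" where
  "ybstar I J y0 S = (\<lambda>p. if p \<in> I then y0 p else if p \<in> J - S then 1 else 0)"

end

theory Submission
  imports Defs
begin

text \<open>
  On \<open>J\<close> every pair \<open>(y\<^sup>i, ybar\<^sup>i)\<close> is complementary, so along an edge inside \<open>J\<close> exactly one
  endpoint lies in \<open>U\<^sub>i\<close>: each \<open>U\<^sub>i\<close> is a cut of the subgraph induced by \<open>J\<close>. The symmetric
  difference of three such cuts is again a cut, and so is its complement in \<open>J\<close>; as
  \<open>ybar\<^sup>*(S) = y\<^sup>*(J - S)\<close>, it suffices to treat \<open>y\<^sup>*\<close>.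
  Any cut \<open>S\<close> of \<open>J\<close> yields a stable set \<open>y\<^sup>*(S)\<close>: edges inside \<open>I\<close> are covered
  by the stability of \<open>y\<^sup>0\<close>, and a vertex of \<open>I\<close> adjacent to \<open>J\<close> has \<open>y\<^sup>0 = 0\<close>,
  because \<open>y\<^sup>0\<close> and \<open>ybar\<^sup>0\<close> agree on it while one of them is \<open>1\<close> on its neighbour.
\<close>

definition cuts :: "nat set set \<Rightarrow> nat set \<Rightarrow> nat set \<Rightarrow> bool" where
  "cuts E J S \<longleftrightarrow> (\<forall>u v. {u, v} \<in> E \<longrightarrow> u \<in> J \<longrightarrow> v \<in> J \<longrightarrow> (u \<in> S \<longleftrightarrow> v \<notin> S))"

lemma cuts_symdiff3:
  "cuts E J A \<Longrightarrow> cuts E J B \<Longrightarrow> cuts E J C \<Longrightarrow> cuts E J (symdiff (symdiff A B) C)"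
  unfolding cuts_def symdiff_def by blast

lemma cuts_Diff: "cuts E J S \<Longrightarrow> cuts E J (J - S)"
  unfolding cuts_def by blast

lemma Stable_le_one: "x \<in> Stable m E \<Longrightarrow> x p \<le> 1"
  unfolding Stable_def by (cases "p \<in> {1..m}") fastforce+

lemma Stable_edge: "x \<in> Stable m E \<Longrightarrow> {u, v} \<in> E \<Longrightarrow> x u + x v \<le> 1"
  unfolding Stable_def by blast

lemma Jset_sum_eq_one:
  assumes "y0 \<in> Stable m E" "yb0 \<in> Stable m E" "p \<in> Jset m y0 yb0"
  shows "y0 p + yb0 p = 1"
  using assms Stable_le_one[of y0 m E p] Stable_le_one[of yb0 m E p]
  by (auto simp: Jset_def Iset_def)

lemma not_in_Jset_eq:
  assumes "y0 \<in> Stable m E" "yb0 \<in> Stable m E" "p \<notin> Jset m y0 yb0"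
  shows "y0 p = yb0 p"
  using assms by (cases "p \<in> {1..m}") (auto simp: Jset_def Iset_def Stable_def)

lemma neighbour_of_Jset_zero:
  assumes y0: "y0 \<in> Stable m E" and yb0: "yb0 \<in> Stable m E"
    and "{u, v} \<in> E" "u \<in> Jset m y0 yb0" "v \<notin> Jset m y0 yb0"
  shows "y0 v = 0"
proof -
  have "y0 u + yb0 u = 1" using Jset_sum_eq_one[OF y0 yb0] assms by blast
  moreover have "y0 v = yb0 v" using not_in_Jset_eq[OF y0 yb0] assms by blast
  moreover have "y0 u + y0 v \<le> 1" "yb0 u + yb0 v \<le> 1"
    using Stable_edge[OF y0] Stable_edge[OF yb0] assms by blast+
  ultimately show ?thesis by linarith
qed

lemma cuts_ones_of_complementary:
  assumes x: "x \<in> Stable m E" and x': "x' \<in> Stable m E"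
    and compl: "\<forall>p\<in>J. x p + x' p = 1"
  shows "cuts E J {p \<in> J. x p = 1}"
  unfolding cuts_def
proof (intro allI impI)
  fix u v assume "{u, v} \<in> E" "u \<in> J" "v \<in> J"
  then have "x u + x' u = 1" "x v + x' v = 1" "x u + x v \<le> 1" "x' u + x' v \<le> 1"
    using compl Stable_edge[OF x] Stable_edge[OF x'] by auto
  then have "x u + x v = 1" by linarith
  then show "(u \<in> {p \<in> J. x p = 1}) = (v \<notin> {p \<in> J. x p = 1})"
    using \<open>u \<in> J\<close> \<open>v \<in> J\<close> by auto
qed

lemma Uset_cuts:
  assumes "y \<in> Stable m E" "yb \<in> Stable m E" "y0 \<in> Stable m E" "yb0 \<in> Stable m E"
    and "\<forall>p. y p + yb p = y0 p + yb0 p"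
  shows "cuts E (Jset m y0 yb0) (Uset (Jset m y0 yb0) j0 y yb)"
proof -
  have "\<forall>p\<in>Jset m y0 yb0. y p + yb p = 1"
    using assms Jset_sum_eq_one[of y0 m E yb0] by auto
  then show ?thesis
    unfolding Uset_def
    using cuts_ones_of_complementary[of y m E yb] cuts_ones_of_complementary[of yb m E y] assms
    by (simp add: add.commute)
qed

lemma ystar_Stable:
  assumes y0: "y0 \<in> Stable m E" and yb0: "yb0 \<in> Stable m E"
    and cut: "cuts E (Jset m y0 yb0) S"
  shows "ystar (Iset m y0 yb0) (Jset m y0 yb0) y0 S \<in> Stable m E"
proof -
  define I J where "I = Iset m y0 yb0" and "J = Jset m y0 yb0"
  define z where "z = ystar I J y0 S"
  have IJ: "I \<inter> J = {}" "I \<subseteq> {1..m}" "J \<subseteq> {1..m}"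
    by (auto simp: I_def J_def Iset_def Jset_def)
  have z_le_one: "z p \<le> 1" for p
    using Stable_le_one[OF y0] by (simp add: z_def ystar_def)
  have z_outside_J: "z p \<le> y0 p" if "p \<notin> J" for p
    using that by (simp add: z_def ystar_def)
  have "z u + z v \<le> 1" if e: "{u, v} \<in> E" for u v
  proof -
    have e': "{v, u} \<in> E" using e by (simp add: insert_commute)
    consider "u \<in> J" "v \<in> J" | "u \<notin> J" "v \<notin> J" | "u \<in> J" "v \<notin> J" | "u \<notin> J" "v \<in> J"
      by blast
    then show ?thesis
    proof cases
      case 1
      then show ?thesis using cut e IJ(1) by (auto simp: cuts_def z_def ystar_def J_def)
    next
      case 2
      then show ?thesis using z_outside_J[of u] z_outside_J[of v] Stable_edge[OF y0 e] by linarith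
    next
      case 3
      then show ?thesis
        using neighbour_of_Jset_zero[OF y0 yb0 e] z_outside_J[of v] z_le_one[of u]
        by (simp add: J_def)
    next
      case 4
      then show ?thesis
        using neighbour_of_Jset_zero[OF y0 yb0 e'] z_outside_J[of u] z_le_one[of v]
        by (simp add: J_def)
    qed
  qed
  moreover have "z p = 0" if "p \<notin> {1..m}" for p
    using that IJ by (auto simp: z_def ystar_def)
  moreover have "z p \<in> {0, 1}" for p
    using z_le_one[of p] by auto
  ultimately show ?thesis
    unfolding Stable_def z_def I_def J_def by blast
qed

lemma ybstar_eq_ystar_Diff: "ybstar I J y0 S = ystar I J y0 (J - S)"
  unfolding ybstar_def ystar_def by auto

theorem lemma1:
  fixes m k :: nat and E :: "nat set set"
    and y yb :: "nat \<Rightarrow> nat \<Rightarrow> nat" and j0 :: nat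
  assumes "is_graph m E"
    and "k \<ge> 1"
    and "\<forall>i\<le>2*k. y i \<in> Stable m E \<and> yb i \<in> Stable m E"
    and "\<forall>i\<le>2*k. \<forall>j\<le>2*k. i \<noteq> j \<longrightarrow> y i \<noteq> y j \<and> yb i \<noteq> yb j"
    and "\<forall>i\<le>2*k. \<forall>j\<le>2*k. y i \<noteq> yb j"
    and "\<forall>i\<le>2*k. \<forall>p. y i p + yb i p = y 0 p + yb 0 p"
    and "j0 \<in> Jset m (y 0) (yb 0)"
  shows "\<forall>i j t. i < j \<and> j < t \<and> t \<le> 2*k \<longrightarrow>
     (let I = Iset m (y 0) (yb 0); J = Jset m (y 0) (yb 0);
          U = (\<lambda>r. Uset J j0 (y r) (yb r));
          S = symdiff (symdiff (U i) (U j)) (U t)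
      in ystar I J (y 0) S \<in> Stable m E \<and> ybstar I J (y 0) S \<in> Stable m E)"
proof (intro allI impI)
  fix i j t assume ijt: "i < j \<and> j < t \<and> t \<le> 2*k"
  define J where "J = Jset m (y 0) (yb 0)"
  define U where "U r = Uset J j0 (y r) (yb r)" for r
  define S where "S = symdiff (symdiff (U i) (U j)) (U t)"
  have y0: "y 0 \<in> Stable m E" "yb 0 \<in> Stable m E" using assms(3) by auto
  have "cuts E J (U r)" if "r \<le> 2*k" for r
    using Uset_cuts[OF _ _ y0] assms(3,6) that unfolding U_def J_def by blast
  then have "cuts E J S"
    using ijt unfolding S_def by (simp add: cuts_symdiff3)
  then show "let I = Iset m (y 0) (yb 0); J = Jset m (y 0) (yb 0);
          U = (\<lambda>r. Uset J j0 (y r) (yb r));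
          S = symdiff (symdiff (U i) (U j)) (U t)
      in ystar I J (y 0) S \<in> Stable m E \<and> ybstar I J (y 0) S \<in> Stable m E"
    using ystar_Stable[OF y0] cuts_Diff
    unfolding Let_def ybstar_eq_ystar_Diff S_def U_def J_def by blast
qed

end
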